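(* Let $g$ be a generating function, $t$ a witness function, and $\mathcal P_g,\mathcal P_t$ sets of p-conditions. Then for every program $\Pi$, the graph $T(\mathcal P_g,\mathcal P_t,g,t)(\Pi)$ is finite and acyclic.
   Context: Literals are atoms $a$ or negations $\neg a$; $\overline{l}$ is the complement of $l$. A set of literals is consistent if it contains no literal together with its complement; $\mathrm{atoms}(L)$ is the set of atoms in $L$; $L$ is complete over $X$ if $\mathrm{atoms}(L)=X$. A program $\Pi$ is a finite set of rules $A\leftarrow B$, with head $A$ a possibly empty disjunction of atoms and body $B$ an expression $a_1,\dots,a_j,\ not\ a_{j+1},\dots,not\ a_k$ (identified with a conjunction of literals); non-disjunctive if every head has at most one atom. $\mathrm{atoms}(\Pi)$ is the set of atoms of $\Pi$. A p-condition maps a program $\Pi$ and a set $L$ of literals over $\mathrm{atoms}(\Pi)$ to a set of literals over $\mathrm{atoms}(\Pi)$; $\mathrm{Out}_{\mathcal P}(\Pi,M)=\bigcup_{p\in\mathcal P}p(\Pi,M)$. A generating function $g$ maps each program $\Pi$ to a program $g(\Pi)$ with $\mathrm{atoms}(\Pi)\subseteq\mathrm{atoms}(g(\Pi))$. A set $M$ covers $\Pi$ if $\mathrm{atoms}(\Pi)\subseteq\mathrm{atoms}(M)$. A witness function $t$ maps a program $\Pi$ and a consistent $M$ covering $\Pi$ to a non-disjunctive program $t(\Pi,M)$. $\mathrm{atoms}(t,\Pi,X)$ is the union of $\mathrm{atoms}(t(\Pi,L))$ over consistent $L$ complete over $X$. A record relative to a set $X$ of atoms is a finite string of literals over $X$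 and possibly $\bot$, without repetitions, in which some literals may be annotated as decision literals $l^\Delta$; it is identified when convenient with the set of its elements and is inconsistent if it contains $\bot$ or a literal and its complement. A state relative to $X,X'$ is $(L,R)_s$ ($L$ a record relative to $X$, $R$ relative to $X'$, $s\in\{\mathcal L,\mathcal R\}$), or $\mathit{Ok}(L)$ ($L$ a record relative to $X$), or $\mathit{Failstate}$. $T(\mathcal P_{\mathcal L},\mathcal P_{\mathcal R},g,t)(\Pi)$ has as nodes the states relative to $\mathrm{atoms}(g(\Pi))$ and $\mathrm{atoms}(t,\Pi,\mathrm{atoms}(g(\Pi)))$, initial state $(\emptyset,\emptyset)_{\mathcal L}$, and edges given by ($L,L',R,R'$ records, $l$ a literal): Left-rules: Conclude$_{\mathcal L}$: $(L,\emptyset)_{\mathcal L}\Rightarrow\mathit{Failstate}$ if $L$ is inconsistent with no decision literal. Backtrack$_{\mathcal L}$: $(L\,l^\Delta L',\emptyset)_{\mathcal L}\Rightarrow(L\,\overline l,\emptyset)_{\mathcal L}$ if $L\,l^\Delta L'$ is inconsistent and $L'$ has no decision literal. Propagate$_{\mathcal L}$: $(L,\emptyset)_{\mathcal L}\Rightarrow(L\,l,\emptyset)_{\mathcal L}$ if $l\in\mathrm{Out}_{\mathcal P_{\mathcal L}}(g(\Pi),L)$. Decide$_{\mathcal L}$: $(L,\emptyset)_{\mathcal L}\Rightarrow(L\,l^\Delta,\emptyset)_{\mathcal L}$ if $L$ consistent, $l$ over $\mathrm{atoms}(g(\Pi))$, neither $l$ nor $\overline l$ in $L$. Cross$_{\mathcal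 L\mathcal R}$: $(L,\emptyset)_{\mathcal L}\Rightarrow(L,\emptyset)_{\mathcal R}$ if no left-rule applies. Right-rules: Conclude$_{\mathcal R}$: $(L,R)_{\mathcal R}\Rightarrow\mathit{Ok}(L)$ if $R$ is inconsistent with no decision literal. Backtrack$_{\mathcal R}$: $(L,R\,l^\Delta R')_{\mathcal R}\Rightarrow(L,R\,\overline l)_{\mathcal R}$ if $R\,l^\Delta R'$ inconsistent and $R'$ has no decision literal. Propagate$_{\mathcal R}$: $(L,R)_{\mathcal R}\Rightarrow(L,R\,l)_{\mathcal R}$ if $l\in\mathrm{Out}_{\mathcal P_{\mathcal R}}(t(\Pi,L),R)$. Decide$_{\mathcal R}$: $(L,R)_{\mathcal R}\Rightarrow(L,R\,l^\Delta)_{\mathcal R}$ if $R$ consistent, $l$ over $\mathrm{atoms}(t(\Pi,L))$, neither $l$ nor $\overline l$ in $R$. Conclude$_{\mathcal R\mathcal L}$: $(L,R)_{\mathcal R}\Rightarrow\mathit{Failstate}$ if no right-rule applies and $L$ has no decision literal. Backtrack$_{\mathcal R\mathcal L}$: $(L\,l^\Delta L',R)_{\mathcal R}\Rightarrow(L\,\overline l,\emptyset)_{\mathcal L}$ if no right-rule applies and $L'$ has no decision literal. *)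

theory Defs
  imports Main
begin

datatype 'a lit = Pos 'a | Neg 'a

fun atom_of :: "'a lit \<Rightarrow> 'a" where
  "atom_of (Pos a) = a" | "atom_of (Neg a) = a"

fun compl :: "'a lit \<Rightarrow> 'a lit" where
  "compl (Pos a) = Neg a" | "compl (Neg a) = Pos a"

definition lits_atoms :: "'a lit set \<Rightarrow> 'a set" where
  "lits_atoms L = atom_of ` L"

definition consistent :: "'a lit set \<Rightarrow> bool" where
  "consistent L \<longleftrightarrow> (\<forall>l\<in>L. compl l \<notin> L)"

definition complete_over :: "'a lit set \<Rightarrow> 'a set \<Rightarrow> bool" where
  "complete_over L X \<longleftrightarrow> lits_atoms L = X"

text \<open>A rule  A <- a_1,...,a_j, not a_{j+1},...,not a_k : head (disjunction of atoms),
  positive body atoms, negated body atoms.\<close>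
datatype 'a rule = Rule (head: "'a list") (pos_body: "'a list") (neg_body: "'a list")

type_synonym 'a program = "'a rule set"

definition is_program :: "'a program \<Rightarrow> bool" where
  "is_program \<Pi> \<longleftrightarrow> finite \<Pi>"

definition rule_atoms :: "'a rule \<Rightarrow> 'a set" where
  "rule_atoms r = set (head r) \<union> set (pos_body r) \<union> set (neg_body r)"

definition atoms :: "'a program \<Rightarrow> 'a set" where
  "atoms \<Pi> = (\<Union>r\<in>\<Pi>. rule_atoms r)"

definition nondisjunctive :: "'a program \<Rightarrow> bool" where
  "nondisjunctive \<Pi> \<longleftrightarrow> (\<forall>r\<in>\<Pi>. card (set (head r)) \<le> 1)"

definition covers :: "'a lit set \<Rightarrow> 'a program \<Rightarrow> bool" where
  "covers M \<Pi> \<longleftrightarrow> atoms \<Pi> \<subseteq> lits_atoms M"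

type_synonym 'a pcond = "'a program \<Rightarrow> 'a lit set \<Rightarrow> 'a lit set"

definition pcondition :: "'a pcond \<Rightarrow> bool" where
  "pcondition p \<longleftrightarrow> (\<forall>\<Pi> L. is_program \<Pi> \<longrightarrow> lits_atoms L \<subseteq> atoms \<Pi> \<longrightarrow>
                        lits_atoms (p \<Pi> L) \<subseteq> atoms \<Pi>)"

definition Out :: "'a pcond set \<Rightarrow> 'a program \<Rightarrow> 'a lit set \<Rightarrow> 'a lit set" where
  "Out P \<Pi> M = (\<Union>p\<in>P. p \<Pi> M)"

definition generating_function :: "('a program \<Rightarrow> 'a program) \<Rightarrow> bool" where
  "generating_function g \<longleftrightarrow>
     (\<forall>\<Pi>. is_program \<Pi> \<longrightarrow> is_program (g \<Pi>) \<and> atoms \<Pi> \<subseteq> atoms (g \<Pi>))"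

definition witness_function :: "('a program \<Rightarrow> 'a lit set \<Rightarrow> 'a program) \<Rightarrow> bool" where
  "witness_function t \<longleftrightarrow>
     (\<forall>\<Pi> M. is_program \<Pi> \<longrightarrow> consistent M \<longrightarrow> covers M \<Pi> \<longrightarrow>
        is_program (t \<Pi> M) \<and> nondisjunctive (t \<Pi> M))"

definition wit_atoms :: "('a program \<Rightarrow> 'a lit set \<Rightarrow> 'a program) \<Rightarrow> 'a program \<Rightarrow> 'a set \<Rightarrow> 'a set" where
  "wit_atoms t \<Pi> X = \<Union> {atoms (t \<Pi> L) | L. consistent L \<and> complete_over L X}"

datatype 'a relem = RLit "'a lit" | RDec "'a lit" | RBot

fun rcontent :: "'a relem \<Rightarrow> 'a lit option" where
  "rcontent (RLit l) = Some l" | "rcontent (RDec l) = Some l" | "rcontent RBot = None"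

definition rlits :: "'a relem list \<Rightarrow> 'a lit set" where
  "rlits r = {l. Some l \<in> set (map rcontent r)}"

definition is_record :: "'a set \<Rightarrow> 'a relem list \<Rightarrow> bool" where
  "is_record X r \<longleftrightarrow> distinct (map rcontent r) \<and> lits_atoms (rlits r) \<subseteq> X"

definition inconsistent :: "'a relem list \<Rightarrow> bool" where
  "inconsistent r \<longleftrightarrow> RBot \<in> set r \<or> \<not> consistent (rlits r)"

definition no_dec :: "'a relem list \<Rightarrow> bool" where
  "no_dec r \<longleftrightarrow> (\<forall>l. RDec l \<notin> set r)"

datatype side = SL | SR

datatype 'a state = St "'a relem list" "'a relem list" side | Ok "'a relem list" | Failstate

definition states :: "'a set \<Rightarrow> 'a set \<Rightarrow> 'a state set" where
  "states X X' = {St L R s | L R s. is_record X L \<and> is_record X' R}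
                 \<union> {Ok L | L. is_record X L} \<union> {Failstate}"

definition T_nodes :: "('a program \<Rightarrow> 'a program) \<Rightarrow> ('a program \<Rightarrow> 'a lit set \<Rightarrow> 'a program)
                       \<Rightarrow> 'a program \<Rightarrow> 'a state set" where
  "T_nodes g t \<Pi> = states (atoms (g \<Pi>)) (wit_atoms t \<Pi> (atoms (g \<Pi>)))"

definition left_rule :: "'a pcond set \<Rightarrow> ('a program \<Rightarrow> 'a program) \<Rightarrow> 'a program
                          \<Rightarrow> 'a state \<Rightarrow> 'a state \<Rightarrow> bool" where
  "left_rule PL g \<Pi> S S' \<longleftrightarrow>
     \<comment> \<open>Conclude_L\<close>
     (\<exists>L. S = St L [] SL \<and> inconsistent L \<and> no_dec L \<and> S' = Failstate)
   \<or> \<comment> \<open>Backtrack_L\<close>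
     (\<exists>L l L'. S = St (L @ [RDec l] @ L') [] SL \<and> inconsistent (L @ [RDec l] @ L')
        \<and> no_dec L' \<and> S' = St (L @ [RLit (compl l)]) [] SL)
   \<or> \<comment> \<open>Propagate_L\<close>
     (\<exists>L l. S = St L [] SL \<and> l \<in> Out PL (g \<Pi>) (rlits L) \<and> S' = St (L @ [RLit l]) [] SL)
   \<or> \<comment> \<open>Decide_L\<close>
     (\<exists>L l. S = St L [] SL \<and> \<not> inconsistent L \<and> atom_of l \<in> atoms (g \<Pi>)
        \<and> l \<notin> rlits L \<and> compl l \<notin> rlits L \<and> S' = St (L @ [RDec l]) [] SL)"

definition right_rule :: "'a pcond set \<Rightarrow> ('a program \<Rightarrow> 'a lit set \<Rightarrow> 'a program) \<Rightarrow> 'a program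
                          \<Rightarrow> 'a state \<Rightarrow> 'a state \<Rightarrow> bool" where
  "right_rule PR t \<Pi> S S' \<longleftrightarrow>
     \<comment> \<open>Conclude_R\<close>
     (\<exists>L R. S = St L R SR \<and> inconsistent R \<and> no_dec R \<and> S' = Ok L)
   \<or> \<comment> \<open>Backtrack_R\<close>
     (\<exists>L R l R'. S = St L (R @ [RDec l] @ R') SR \<and> inconsistent (R @ [RDec l] @ R')
        \<and> no_dec R' \<and> S' = St L (R @ [RLit (compl l)]) SR)
   \<or> \<comment> \<open>Propagate_R\<close>
     (\<exists>L R l. S = St L R SR \<and> l \<in> Out PR (t \<Pi> (rlits L)) (rlits R)
        \<and> S' = St L (R @ [RLit l]) SR)
   \<or> \<comment> \<open>Decide_R\<close>
     (\<exists>L R l. S = St L R SR \<and> \<not> inconsistent R \<and> atom_of l \<in> atoms (t \<Pi> (rlits L))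
        \<and> l \<notin> rlits R \<and> compl l \<notin> rlits R \<and> S' = St L (R @ [RDec l]) SR)"

text \<open>A rule "applies" at a node when it yields an edge to some node of the graph.\<close>
definition T_edges :: "'a pcond set \<Rightarrow> 'a pcond set \<Rightarrow> ('a program \<Rightarrow> 'a program)
                       \<Rightarrow> ('a program \<Rightarrow> 'a lit set \<Rightarrow> 'a program) \<Rightarrow> 'a program
                       \<Rightarrow> ('a state \<times> 'a state) set" where
  "T_edges PL PR g t \<Pi> =
     (let N = T_nodes g t \<Pi>;
          lapp = (\<lambda>S. \<exists>S'\<in>N. left_rule PL g \<Pi> S S');
          rapp = (\<lambda>S. \<exists>S'\<in>N. right_rule PR t \<Pi> S S')
      in {(S, S'). S \<in> N \<and> S' \<in> N \<and>
           (left_rule PL g \<Pi> S S'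
            \<or> \<comment> \<open>Cross_LR\<close>
              (\<exists>L. S = St L [] SL \<and> \<not> lapp S \<and> S' = St L [] SR)
            \<or> right_rule PR t \<Pi> S S'
            \<or> \<comment> \<open>Conclude_RL\<close>
              (\<exists>L R. S = St L R SR \<and> \<not> rapp S \<and> no_dec L \<and> S' = Failstate)
            \<or> \<comment> \<open>Backtrack_RL\<close>
              (\<exists>L l L' R. S = St (L @ [RDec l] @ L') R SR \<and> \<not> rapp S \<and> no_dec L'
                 \<and> S' = St (L @ [RLit (compl l)]) [] SL))})"

end

theory Submission
  imports Defs "HOL-Library.List_Lexorder" "HOL-Library.Product_Lexorder"
begin

text \<open>
  Acyclicity: rank a state by the lexicographic tuple (terminal?, L, side, R), where a record
  is read as the word obtained by weighting decision literals 1 and all other entries 2.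
  Propagate and Decide extend a record, Backtrack replaces a suffix starting with a decision by
  a single non-decision entry, Cross only flips the side, and Conclude reaches a terminal state;
  each of these strictly increases the rank, so no edge lies on a cycle.
  Finiteness: records are lists without repeated literals over finitely many atoms.
  Neither argument depends on the p-conditions, which only determine which literals are propagated.
\<close>

fun relem_weight :: "'a relem \<Rightarrow> nat" where
  "relem_weight (RDec _) = 1"
| "relem_weight (RLit _) = 2"
| "relem_weight RBot = 2"

fun side_weight :: "side \<Rightarrow> nat" where
  "side_weight SL = 0"
| "side_weight SR = 1"

fun state_rank :: "'a state \<Rightarrow> nat \<times> nat list \<times> nat \<times> nat list" where
  "state_rank (St L R s) = (0, map relem_weight L, side_weight s, map relem_weight R)"
| "state_rank (Ok L) = (1, [], 0, [])"
| "state_rank Failstate = (1, [], 0, [])"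

lemma list_less_snoc: "(xs :: 'a :: linorder list) < xs @ [x]"
  by (induction xs) auto

lemma list_less_replace_suffix:
  fixes xs ys :: "'a :: linorder list"
  assumes "a < b"
  shows "xs @ a # ys < xs @ [b]"
  using assms by (induction xs) auto

lemmas record_weights_increase = list_less_snoc list_less_replace_suffix[of "Suc 0" 2]

lemma left_rule_rank_less: "left_rule PL g \<Pi> S S' \<Longrightarrow> state_rank S < state_rank S'"
  by (auto simp: left_rule_def less_prod_def record_weights_increase)

lemma right_rule_rank_less: "right_rule PR t \<Pi> S S' \<Longrightarrow> state_rank S < state_rank S'"
  by (auto simp: right_rule_def less_prod_def record_weights_increase)

lemma T_edges_rank_less:
  "(S, S') \<in> T_edges PL PR g t \<Pi> \<Longrightarrow> state_rank S < state_rank S'"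
  unfolding T_edges_def Let_def
  by (auto dest: left_rule_rank_less right_rule_rank_less
           simp: less_prod_def record_weights_increase)

lemma acyclic_T_edges: "acyclic (T_edges PL PR g t \<Pi>)"
proof -
  have "acyclic ((T_edges PL PR g t \<Pi>)\<inverse>)"
    by (rule acyclicI_order[where f = state_rank]) (auto dest: T_edges_rank_less)
  then show ?thesis by simp
qed

lemma finite_atoms: "is_program \<Pi> \<Longrightarrow> finite (atoms \<Pi>)"
  unfolding is_program_def atoms_def rule_atoms_def by auto

lemma lits_over_eq: "{l. atom_of l \<in> X} = Pos ` X \<union> Neg ` X"
proof -
  have "l \<in> Pos ` X \<union> Neg ` X" if "atom_of l \<in> X" for l
    using that by (cases l) auto
  then show ?thesis by auto
qed

lemma finite_lits_over: "finite X \<Longrightarrow> finite {l. atom_of l \<in> X}"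
  by (simp add: lits_over_eq)

lemma set_record_subset:
  assumes "is_record X L"
  shows "set L \<subseteq> insert RBot (RLit ` {l. atom_of l \<in> X} \<union> RDec ` {l. atom_of l \<in> X})"
proof
  fix e assume e: "e \<in> set L"
  have "atom_of l \<in> X" if "rcontent e = Some l" for l
  proof -
    have "l \<in> rlits L" using e that unfolding rlits_def by force
    then show ?thesis using assms unfolding is_record_def lits_atoms_def by auto
  qed
  then show "e \<in> insert RBot (RLit ` {l. atom_of l \<in> X} \<union> RDec ` {l. atom_of l \<in> X})"
    by (cases e) auto
qed

lemma finite_records: "finite X \<Longrightarrow> finite {L. is_record X L}"
proof -
  assume "finite X"
  let ?E = "insert RBot (RLit ` {l. atom_of l \<in> X} \<union> RDec ` {l. atom_of l \<in> X})"
  have "{L. is_record X L} \<subseteq> {L. set L \<subseteq> ?E \<and> distinct L}"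
    using set_record_subset by (auto simp: is_record_def simp: distinct_map)
  moreover have "finite {L. set L \<subseteq> ?E \<and> distinct L}"
    using \<open>finite X\<close> by (intro finite_subset_distinct) (simp add: finite_lits_over)
  ultimately show ?thesis by (rule finite_subset)
qed

lemma finite_states:
  assumes "finite X" "finite X'"
  shows "finite (states X X')"
proof -
  let ?A = "{L. is_record X L}" and ?B = "{R. is_record X' R}"
  have "finite (UNIV :: side set)"
    by (rule finite_subset[of _ "{SL, SR}"]) (use side.exhaust in auto)
  then have "finite (?A \<times> ?B \<times> (UNIV :: side set))"
    using finite_records assms by (intro finite_cartesian_product) auto
  moreover have "states X X' \<subseteq> (\<lambda>(L, R, s). St L R s) ` (?A \<times> ?B \<times> UNIV) \<union> Ok ` ?A \<union> {Failstate}"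
    unfolding states_def by (auto intro!: image_eqI)
  ultimately show ?thesis
    using finite_records[OF assms(1)] by (auto intro: finite_subset)
qed

lemma finite_complete_consistent: "finite X \<Longrightarrow> finite {L. consistent L \<and> complete_over L X}"
  by (rule finite_subset[of _ "Pow {l. atom_of l \<in> X}"])
     (auto simp: complete_over_def lits_atoms_def finite_lits_over)

lemma finite_wit_atoms:
  assumes "witness_function t" "is_program \<Pi>" "atoms \<Pi> \<subseteq> X" "finite X"
  shows "finite (wit_atoms t \<Pi> X)"
proof -
  have "finite (atoms (t \<Pi> L))" if "consistent L" "complete_over L X" for L
  proof -
    have "covers L \<Pi>" using that assms(3) unfolding covers_def complete_over_def by simp
    then have "is_program (t \<Pi> L)"
      using assms(1,2) that unfolding witness_function_def by blast
    then show ?thesis by (rule finite_atoms)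
  qed
  moreover have "finite {atoms (t \<Pi> L) | L. consistent L \<and> complete_over L X}"
    using finite_complete_consistent[OF assms(4)] by (simp add: setcompr_eq_image)
  ultimately show ?thesis unfolding wit_atoms_def by auto
qed

lemma finite_T_nodes:
  assumes "generating_function g" "witness_function t" "is_program \<Pi>"
  shows "finite (T_nodes g t \<Pi>)"
proof -
  have "is_program (g \<Pi>)" and "atoms \<Pi> \<subseteq> atoms (g \<Pi>)"
    using assms(1,3) unfolding generating_function_def by auto
  then show ?thesis
    unfolding T_nodes_def using assms(2,3)
    by (intro finite_states finite_wit_atoms finite_atoms)
qed

lemma T_edges_subset_nodes: "T_edges PL PR g t \<Pi> \<subseteq> T_nodes g t \<Pi> \<times> T_nodes g t \<Pi>"
  unfolding T_edges_def Let_def by auto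

theorem lemma4:
  fixes g :: "'a program \<Rightarrow> 'a program"
    and t :: "'a program \<Rightarrow> 'a lit set \<Rightarrow> 'a program"
    and Pg Pt :: "'a pcond set"
    and \<Pi> :: "'a program"
  assumes "generating_function g"
    and "witness_function t"
    and "\<forall>p\<in>Pg. pcondition p"
    and "\<forall>p\<in>Pt. pcondition p"
    and "is_program \<Pi>"
  shows "finite (T_nodes g t \<Pi>) \<and> finite (T_edges Pg Pt g t \<Pi>) \<and> acyclic (T_edges Pg Pt g t \<Pi>)"
proof -
  have nodes: "finite (T_nodes g t \<Pi>)"
    using assms(1,2,5) by (rule finite_T_nodes)
  moreover have "finite (T_edges Pg Pt g t \<Pi>)"
    using nodes by (intro finite_subset[OF T_edges_subset_nodes]) simp
  ultimately show ?thesis using acyclic_T_edges by (intro conjI)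
qed

end
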